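(* Suppose that for each agent $i\in\mathcal{N}$ the support set is a polytope $\Xi_i=\{\xi_i\in\mathbb{R}^p: C_i\xi_i\le d_i\}$ with $C_i\in\mathbb{R}^{m\times p}$, $d_i\in\mathbb{R}^m$, and that $h_i(x,\xi_i)=\max_{\ell=1,\dots,L_i}h_{\ell_i}(x,\xi_i)$ with $h_{\ell_i}(x,\xi_i)=a_{\ell_i}(x)^\top\xi_i+b_{\ell_i}(x)$, where $a_{\ell_i}:\mathbb{R}^{nN}\to\mathbb{R}^p$, $b_{\ell_i}:\mathbb{R}^{nN}\to\mathbb{R}$. Consider the generalized Nash equilibrium problem in which each agent $i$, given $x_{-i}$, solves $$\min_{x_i\in X_i,\ \lambda_i,\ s_{k},\ \gamma_{k,\ell}}\ \lambda_i\epsilon_i+\frac1{K_i}\sum_{k=1}^{K_i}s_{k}$$ subject to, for all $k\in\{1,\dots,K_i\}$, $\ell\in\{1,\dots,L_i\}$: $$b_{\ell_i}(x_i,x_{-i})+a_{\ell_i}(x_i,x_{-i})^\top\xi_i^{(k)}+\gamma_{k,\ell}^\top(d_i-C_i\xi_i^{(k)})\le s_{k},\quad \|C_i^\top\gamma_{k,\ell}-a_{\ell_i}(x_i,x_{-i})\|\le\lambda_i,\quad \gamma_{k,\ell}\ge0,$$ with $\lambda_i,s_k\in\mathbb{R}$, $\gamma_{k,\ell}\in\mathbb{R}^m$. If $(x^*,\lambda^*,s^*,\gamma^* )$ is a generalized Nash equilibrium of this problem, then $x^*$ is a DRNE of the game $\forall i:\ \min_{x_i\in X_i}\max_{\mathb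b{Q}_i\in\mathbb{B}_{\epsilon_i}(\hat{\mathbb{P}}_{K_i})}\mathbb{E}_{\mathbb{Q}_i}[h_i(x_i,x_{-i},\xi_i)]$.
   Context: Agents $i\in\mathcal{N}=\{1,\dots,N\}$ choose $x_i\in X_i\subseteq\mathbb{R}^n$, $X=\prod_iX_i$, $x_{-i}$ the others' decisions. $\|\cdot\|$ is the Euclidean norm; $\mathcal{M}(\Xi_i)$ = distributions on $\Xi_i$ with finite first moment; $d_W$ = 1-Wasserstein distance with transport cost $\|\xi-\xi'\|$. Agent $i$ has samples $\xi_i^{(1)},\dots,\xi_i^{(K_i)}\in\Xi_i$, empirical distribution $\hat{\mathbb{P}}_{K_i}=\frac1{K_i}\sum_k\delta_{\xi_i^{(k)}}$, radius $\epsilon_i\ge0$, and ambiguity set $\mathbb{B}_{\epsilon_i}(\hat{\mathbb{P}}_{K_i})=\{\mathbb{Q}\in\mathcal{M}(\Xi_i):d_W(\hat{\mathbb{P}}_{K_i},\mathbb{Q})\le\epsilon_i\}$. A DRNE is $x^*\in X$ with $x^*_i\in\arg\min_{x_i\in X_i}\max_{\mathbb{Q}_i\in\mathbb{B}_{\epsilon_i}(\hat{\mathbb{P}}_{K_i})}\mathbb{E}_{\mathbb{Q}_i}[h_i(x_i,x^*_{-i},\xi_i)]$ for all $i$. A generalized Nash equilibrium of the stated problem is a point at which each agent's block $(x_i^*,\lambda_i^*,s^*_i,\gamma^*_i)$ is feasible and optimal for agent $i$'s problem given $x^*_{-i}$. *)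

theory Defs
  imports "HOL-Probability.Probability"
begin

definition polytope :: "real^'p^'m \<Rightarrow> real^'m \<Rightarrow> (real^'p) set" where
  "polytope C d = {xi. \<forall>j. (C *v xi) $ j \<le> d $ j}"

definition distributions_fm :: "('a::euclidean_space) set \<Rightarrow> 'a measure set" where
  "distributions_fm Xi = {Q. prob_space Q \<and> sets Q = sets borel \<and>
      (AE xi in Q. xi \<in> Xi) \<and> integrable Q norm}"

definition coupling :: "('a::euclidean_space) measure \<Rightarrow> 'a measure \<Rightarrow> ('a \<times> 'a) measure \<Rightarrow> bool" where
  "coupling P Q \<pi> \<longleftrightarrow> prob_space \<pi> \<and> sets \<pi> = sets (borel \<Otimes>\<^sub>M borel) \<and>
      distr \<pi> borel fst = P \<and> distr \<pi> borel snd = Q"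

definition wasserstein1 :: "('a::euclidean_space) measure \<Rightarrow> 'a measure \<Rightarrow> ennreal" where
  "wasserstein1 P Q = (INF \<pi> \<in> {\<pi>. coupling P Q \<pi>}. \<integral>\<^sup>+ z. ennreal (norm (fst z - snd z)) \<partial>\<pi>)"

definition empirical :: "nat \<Rightarrow> (nat \<Rightarrow> 'a::euclidean_space) \<Rightarrow> 'a measure" where
  "empirical K xis = distr (measure_pmf (pmf_of_set {1..K})) borel xis"

definition wball :: "'a::euclidean_space set \<Rightarrow> real \<Rightarrow> 'a measure \<Rightarrow> 'a measure set" where
  "wball Xi \<epsilon> P = {Q \<in> distributions_fm Xi. wasserstein1 P Q \<le> ennreal \<epsilon>}"

text \<open>Worst-case expected cost (the "max" over the ambiguity set, taken as a supremum).\<close>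
definition worst_case :: "'a::euclidean_space measure set \<Rightarrow> ('a \<Rightarrow> real) \<Rightarrow> ereal" where
  "worst_case B h = (SUP Q \<in> B. ereal (\<integral> xi. h xi \<partial>Q))"

definition DRNE ::
  "('N \<Rightarrow> 'x set) \<Rightarrow> ('N \<Rightarrow> 'a::euclidean_space measure set) \<Rightarrow> ('N \<Rightarrow> ('N \<Rightarrow> 'x) \<Rightarrow> 'a \<Rightarrow> real)
     \<Rightarrow> ('N \<Rightarrow> 'x) \<Rightarrow> bool" where
  "DRNE X B h xs \<longleftrightarrow> (\<forall>i. xs i \<in> X i) \<and>
     (\<forall>i. \<forall>y \<in> X i. worst_case (B i) (h i xs) \<le> worst_case (B i) (h i (xs(i := y))))"

end

(*
  Fix agent i and the decisions of the others, so that the cost is the maximum h of L affine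
  functions of xi. Agent i's convex program is then a dual of the worst-case expectation of h over
  the Wasserstein ball, and the two have the same value.

  Weak duality: for feasible (lam, s, gamma) the function G(z) = min_k (s_k + lam |z - xi_k|) is
  lam-Lipschitz, dominates h on the polytope (the gamma-constraints are an LP certificate for this)
  and has empirical mean at most (1/K) sum_k s_k; integrating along a near-optimal coupling gives
  E_Q h <= lam eps + (1/K) sum_k s_k for every Q in the ball.

  Strong duality: the (transport cost, expected cost) pairs of finitely supported couplings form a
  convex subset of the plane. Separating it from the quadrant {c <= eps, v >= w} yields a multiplier
  mu >= 0 with sum_k sup_z (h z - mu |z - xi_k|) <= K (w - mu eps), and conic duality on the
  polytope converts each of these suprema into multipliers gamma, up to an arbitrarily small slack.

  Hence the optimal value of agent i's program is the worst-case expected cost, and optimality of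
  the equilibrium against every deviation y is the DRNE inequality.
*)

theory Submission
  imports Defs
begin

section \<open>Piecewise affine costs on polytopes\<close>

definition max_affine :: "(nat \<Rightarrow> 'a::real_inner) \<Rightarrow> (nat \<Rightarrow> real) \<Rightarrow> nat \<Rightarrow> 'a \<Rightarrow> real" where
  "max_affine a b L \<zeta> = Max ((\<lambda>l. a l \<bullet> \<zeta> + b l) ` {1..L})"

lemma closed_polytope: "closed (polytope C d)"
  unfolding polytope_def
  by (intro closed_Collect_all closed_Collect_le continuous_intros matrix_vector_mult_linear_continuous_on)

lemma polytope_borel: "polytope C d \<in> sets borel"
  using closed_polytope by (rule borel_closed)

lemma max_affine_ge: "l \<in> {1..L} \<Longrightarrow> a l \<bullet> \<zeta> + b l \<le> max_affine a b L \<zeta>"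
  unfolding max_affine_def by (intro Max_ge) auto

lemma max_affine_le_iff: "0 < L \<Longrightarrow> max_affine a b L \<zeta> \<le> t \<longleftrightarrow> (\<forall>l\<in>{1..L}. a l \<bullet> \<zeta> + b l \<le> t)"
  unfolding max_affine_def by (subst Max_le_iff) auto

lemma borel_measurable_max_affine:
  "max_affine a b L \<in> borel_measurable (borel :: 'a::euclidean_space measure)"
  unfolding max_affine_def[abs_def]
  by (intro borel_measurable_Max) (auto intro!: borel_measurable_continuous_onI continuous_intros)

lemma abs_max_affine_le:
  assumes "0 < L"
  shows "\<bar>max_affine a b L \<zeta>\<bar> \<le> (\<Sum>l=1..L. \<bar>b l\<bar>) + (\<Sum>l=1..L. norm (a l)) * norm \<zeta>"
proof -
  have "max_affine a b L \<zeta> \<in> (\<lambda>l. a l \<bullet> \<zeta> + b l) ` {1..L}"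
    unfolding max_affine_def using assms by (intro Max_in) auto
  then obtain l where l: "l \<in> {1..L}" "max_affine a b L \<zeta> = a l \<bullet> \<zeta> + b l"
    by auto
  have "\<bar>a l \<bullet> \<zeta> + b l\<bar> \<le> norm (a l) * norm \<zeta> + \<bar>b l\<bar>"
    using Cauchy_Schwarz_ineq2[of "a l" \<zeta>] by linarith
  also have "\<dots> \<le> (\<Sum>l=1..L. norm (a l)) * norm \<zeta> + (\<Sum>l=1..L. \<bar>b l\<bar>)"
    using l(1) by (intro add_mono mult_right_mono member_le_sum) auto
  finally show ?thesis using l(2) by simp
qed

section \<open>Lipschitz functions and the Wasserstein ball\<close>

lemma lipschitz_on_Min:
  assumes "finite I" "I \<noteq> {}" and lip: "\<And>i. i \<in> I \<Longrightarrow> M-lipschitz_on X (f i)"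
  shows "M-lipschitz_on X (\<lambda>x. Min ((\<lambda>i. f i x) ` I) :: real)"
proof (rule lipschitz_onI)
  have Min_le: "Min ((\<lambda>i. f i x) ` I) \<le> Min ((\<lambda>i. f i y) ` I) + M * dist x y"
    if "x \<in> X" "y \<in> X" for x y
  proof -
    have "Min ((\<lambda>i. f i y) ` I) \<in> (\<lambda>i. f i y) ` I"
      using assms(1,2) by (intro Min_in) auto
    then obtain i where i: "i \<in> I" "Min ((\<lambda>i. f i y) ` I) = f i y"
      by auto
    have "Min ((\<lambda>i. f i x) ` I) \<le> f i x"
      using assms(1) i(1) by (intro Min_le) auto
    also have "\<dots> \<le> f i y + M * dist x y"
      using lipschitz_onD[OF lip[OF i(1)] that] by (simp add: dist_real_def)
    finally show ?thesis using i(2) by simp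
  qed
  show "dist (Min ((\<lambda>i. f i x) ` I)) (Min ((\<lambda>i. f i y) ` I)) \<le> M * dist x y"
    if "x \<in> X" "y \<in> X" for x y
    using Min_le[OF that] Min_le[OF that(2,1)] by (simp add: dist_real_def dist_commute abs_le_iff)
  show "0 \<le> M"
    using assms(2) lip lipschitz_on_nonneg by blast
qed

lemma lipschitz_on_dist_point:
  assumes "0 \<le> M"
  shows "M-lipschitz_on X (\<lambda>x. c + M * dist x z)"
proof (rule lipschitz_onI)
  fix x y
  have "M * dist x z \<le> M * (dist x y + dist y z)" "M * dist y z \<le> M * (dist y x + dist x z)"
    by (intro mult_left_mono dist_triangle assms)+
  then show "dist (c + M * dist x z) (c + M * dist y z) \<le> M * dist x y"
    by (simp add: dist_real_def abs_le_iff dist_commute algebra_simps)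
qed fact

lemma borel_measurable_lipschitz:
  "M-lipschitz_on UNIV f \<Longrightarrow> f \<in> borel_measurable borel"
  by (intro borel_measurable_continuous_onI lipschitz_on_continuous_on)

lemma integrable_of_affine_growth:
  fixes f :: "'a::euclidean_space \<Rightarrow> real"
  assumes "prob_space Q" "integrable Q norm" "f \<in> borel_measurable Q"
    and growth: "\<And>x. \<bar>f x\<bar> \<le> A + B * norm x"
  shows "integrable Q f"
proof (rule Bochner_Integration.integrable_bound)
  interpret prob_space Q by fact
  show "integrable Q (\<lambda>x. A + B * norm x)"
    using assms(2) by (intro Bochner_Integration.integrable_add integrable_mult_right) auto
  show "AE x in Q. norm (f x) \<le> norm (A + B * norm x)"
    using growth by (auto intro: order_trans[OF _ abs_ge_self])
qed fact

lemma integrable_lipschitz: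
  fixes G :: "'a::euclidean_space \<Rightarrow> real"
  assumes "prob_space Q" "sets Q = sets borel" "integrable Q norm" "M-lipschitz_on UNIV G"
  shows "integrable Q G"
proof (rule integrable_of_affine_growth[OF assms(1,3)])
  show "G \<in> borel_measurable Q"
    using borel_measurable_lipschitz[OF assms(4)] measurable_cong_sets[OF assms(2) refl] by blast
  show "\<bar>G x\<bar> \<le> \<bar>G 0\<bar> + M * norm x" for x
    using lipschitz_onD[OF assms(4), of x 0] by (simp add: dist_real_def)
qed

lemma
  fixes f :: "'a::euclidean_space \<Rightarrow> real"
  assumes "0 < K" "f \<in> borel_measurable borel"
  shows integrable_empirical: "integrable (empirical K \<xi>) f"
    and integral_empirical: "integral\<^sup>L (empirical K \<xi>) f = (\<Sum>k=1..K. f (\<xi> k)) / real K"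
  using assms unfolding empirical_def
  by (auto simp: integrable_distr_eq integral_distr integral_pmf_of_set
      intro!: integrable_measure_pmf_finite)

lemma coupling_measurable:
  assumes "coupling P Q \<pi>"
  shows "fst \<in> measurable \<pi> borel" "snd \<in> measurable \<pi> borel"
  using assms measurable_cong_sets[of \<pi> "borel \<Otimes>\<^sub>M borel"] measurable_fst measurable_snd
  unfolding coupling_def by blast+

lemma coupling_integral_le_lipschitz:
  fixes G :: "'a::euclidean_space \<Rightarrow> real"
  assumes \<pi>: "coupling P Q \<pi>" and lip: "M-lipschitz_on UNIV G"
    and int: "integrable P G" "integrable Q G" "integrable \<pi> (\<lambda>z. norm (fst z - snd z))"
  shows "integral\<^sup>L Q G \<le> integral\<^sup>L P G + M * integral\<^sup>L \<pi> (\<lambda>z. norm (fst z - snd z))"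
proof -
  note meas = coupling_measurable[OF \<pi>]
  have marg: "distr \<pi> borel fst = P" "distr \<pi> borel snd = Q"
    using \<pi> unfolding coupling_def by auto
  have G: "G \<in> borel_measurable borel"
    by (rule borel_measurable_lipschitz[OF lip])
  have int_fst: "integrable \<pi> (\<lambda>z. G (fst z))" and int_snd: "integrable \<pi> (\<lambda>z. G (snd z))"
    using int(1,2) marg integrable_distr_eq[OF meas(1) G] integrable_distr_eq[OF meas(2) G] by simp_all
  have "integral\<^sup>L Q G = (\<integral>z. G (snd z) \<partial>\<pi>)"
    using integral_distr[OF meas(2) G] marg(2) by simp
  also have "\<dots> \<le> (\<integral>z. G (fst z) + M * norm (fst z - snd z) \<partial>\<pi>)"
  proof (rule integral_mono[OF int_snd])
    show "integrable \<pi> (\<lambda>z. G (fst z) + M * norm (fst z - snd z))"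
      using int_fst int(3) by simp
    show "G (snd z) \<le> G (fst z) + M * norm (fst z - snd z)" for z
      using lipschitz_onD[OF lip, of "snd z" "fst z"] by (simp add: dist_real_def dist_norm norm_minus_commute)
  qed
  also have "\<dots> = (\<integral>z. G (fst z) \<partial>\<pi>) + M * integral\<^sup>L \<pi> (\<lambda>z. norm (fst z - snd z))"
    using int_fst int(3) by simp
  also have "(\<integral>z. G (fst z) \<partial>\<pi>) = integral\<^sup>L P G"
    using integral_distr[OF meas(1) G] marg(1) by simp
  finally show ?thesis .
qed

lemma integral_le_lipschitz_wasserstein1:
  fixes G :: "'a::euclidean_space \<Rightarrow> real"
  assumes W: "wasserstein1 P Q \<le> ennreal \<epsilon>" "0 \<le> \<epsilon>" and lip: "M-lipschitz_on UNIV G"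
    and int: "integrable P G" "integrable Q G"
  shows "integral\<^sup>L Q G \<le> integral\<^sup>L P G + M * \<epsilon>"
proof (rule field_le_epsilon)
  fix e :: real assume "0 < e"
  have "0 \<le> M"
    using lip lipschitz_on_nonneg by blast
  define \<delta> where "\<delta> = e / (M + 1)"
  have \<delta>: "0 < \<delta>" "M * \<delta> \<le> e"
    unfolding \<delta>_def using \<open>0 < e\<close> \<open>0 \<le> M\<close> by (simp_all add: field_simps)
  have "wasserstein1 P Q < ennreal (\<epsilon> + \<delta>)"
    using W \<delta>(1) by (simp add: ennreal_less_iff order.strict_trans1[OF W(1)])
  then obtain \<pi> where \<pi>: "coupling P Q \<pi>"
    and cost: "(\<integral>\<^sup>+ z. ennreal (norm (fst z - snd z)) \<partial>\<pi>) < ennreal (\<epsilon> + \<delta>)"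
    unfolding wasserstein1_def INF_less_iff by auto
  have cost_meas: "(\<lambda>z. norm (fst z - snd z)) \<in> borel_measurable \<pi>"
    using coupling_measurable[OF \<pi>] by measurable
  have int_cost: "integrable \<pi> (\<lambda>z. norm (fst z - snd z))"
    using cost_meas cost by (intro integrableI_bounded) (auto simp: order.strict_trans[OF _ ennreal_less_top])
  have "ennreal (integral\<^sup>L \<pi> (\<lambda>z. norm (fst z - snd z))) < ennreal (\<epsilon> + \<delta>)"
    using cost nn_integral_eq_integral[OF int_cost] by simp
  then have "integral\<^sup>L \<pi> (\<lambda>z. norm (fst z - snd z)) < \<epsilon> + \<delta>"
    using W(2) \<delta>(1) by (subst (asm) ennreal_less_iff) auto
  then have "M * integral\<^sup>L \<pi> (\<lambda>z. norm (fst z - snd z)) \<le> M * \<epsilon> + e"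
    using \<open>0 \<le> M\<close> \<delta>(2) by (smt (verit) mult_left_mono distrib_left)
  then show "integral\<^sup>L Q G \<le> integral\<^sup>L P G + M * \<epsilon> + e"
    using coupling_integral_le_lipschitz[OF \<pi> lip int int_cost] by linarith
qed

lemma worst_case_le_lipschitz_majorant:
  fixes h G :: "'a::euclidean_space \<Rightarrow> real"
  assumes "0 \<le> \<epsilon>" and lip: "M-lipschitz_on UNIV G" and "integrable P G"
    and majorant: "\<And>\<zeta>. \<zeta> \<in> Xi \<Longrightarrow> h \<zeta> \<le> G \<zeta>"
    and "h \<in> borel_measurable borel" and growth: "\<And>\<zeta>. \<bar>h \<zeta>\<bar> \<le> A + B * norm \<zeta>"
  shows "worst_case (wball Xi \<epsilon> P) h \<le> ereal (integral\<^sup>L P G + M * \<epsilon>)"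
  unfolding worst_case_def
proof (rule SUP_least)
  fix Q assume "Q \<in> wball Xi \<epsilon> P"
  then have Q: "prob_space Q" "sets Q = sets borel" "AE \<zeta> in Q. \<zeta> \<in> Xi" "integrable Q norm"
    "wasserstein1 P Q \<le> ennreal \<epsilon>"
    unfolding wball_def distributions_fm_def by auto
  have "h \<in> borel_measurable Q"
    using measurable_cong_sets[OF Q(2) refl] \<open>h \<in> borel_measurable borel\<close> by blast
  then have int_h: "integrable Q h"
    using integrable_of_affine_growth[OF Q(1,4)] growth by blast
  have int_G: "integrable Q G"
    by (rule integrable_lipschitz[OF Q(1,2,4) lip])
  have "integral\<^sup>L Q h \<le> integral\<^sup>L Q G"
    using Q(3) majorant by (intro integral_mono_AE[OF int_h int_G]) auto
  also have "\<dots> \<le> integral\<^sup>L P G + M * \<epsilon>"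
    by (rule integral_le_lipschitz_wasserstein1[OF Q(5) \<open>0 \<le> \<epsilon>\<close> lip \<open>integrable P G\<close> int_G])
  finally show "ereal (integral\<^sup>L Q h) \<le> ereal (integral\<^sup>L P G + M * \<epsilon>)"
    by simp
qed

section \<open>Weak duality\<close>

definition dual_feasible ::
  "real^'p^'m \<Rightarrow> real^'m \<Rightarrow> nat \<Rightarrow> (nat \<Rightarrow> real^'p) \<Rightarrow> nat \<Rightarrow> (nat \<Rightarrow> real^'p) \<Rightarrow> (nat \<Rightarrow> real)
     \<Rightarrow> real \<Rightarrow> (nat \<Rightarrow> real) \<Rightarrow> (nat \<Rightarrow> nat \<Rightarrow> real^'m) \<Rightarrow> bool" where
  "dual_feasible C d K \<xi> L a b lam s \<gamma> \<longleftrightarrow>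
     (\<forall>k\<in>{1..K}. \<forall>l\<in>{1..L}. b l + a l \<bullet> \<xi> k + \<gamma> k l \<bullet> (d - C *v \<xi> k) \<le> s k \<and>
        norm (transpose C *v \<gamma> k l - a l) \<le> lam \<and> (\<forall>j. 0 \<le> \<gamma> k l $ j))"

lemma max_affine_le_dual_bound:
  assumes feas: "dual_feasible C d K \<xi> L a b lam s \<gamma>"
    and "0 < L" "k \<in> {1..K}" "\<zeta> \<in> polytope C d"
  shows "max_affine a b L \<zeta> \<le> s k + lam * norm (\<zeta> - \<xi> k)"
  unfolding max_affine_le_iff[OF \<open>0 < L\<close>]
proof
  fix l assume l: "l \<in> {1..L}"
  let ?g = "\<gamma> k l"
  have g: "b l + a l \<bullet> \<xi> k + ?g \<bullet> (d - C *v \<xi> k) \<le> s k" "norm (transpose C *v ?g - a l) \<le> lam"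
    "\<forall>j. 0 \<le> ?g $ j"
    using feas \<open>k \<in> {1..K}\<close> l unfolding dual_feasible_def by auto
  have slack: "0 \<le> ?g \<bullet> (d - C *v \<zeta>)"
    using g(3) \<open>\<zeta> \<in> polytope C d\<close> unfolding polytope_def inner_vec_def by (auto intro!: sum_nonneg)
  have "a l \<bullet> \<zeta> + b l \<le> a l \<bullet> \<zeta> + b l + ?g \<bullet> (d - C *v \<zeta>)"
    using slack by simp
  also have "\<dots> = (b l + a l \<bullet> \<xi> k + ?g \<bullet> (d - C *v \<xi> k)) + (a l - transpose C *v ?g) \<bullet> (\<zeta> - \<xi> k)"
    by (simp add: inner_diff_right inner_diff_left matrix_vector_mult_diff_distrib dot_lmul_matrix)
  also have "\<dots> \<le> s k + norm (a l - transpose C *v ?g) * norm (\<zeta> - \<xi> k)"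
    using g(1) norm_cauchy_schwarz[of "a l - transpose C *v ?g" "\<zeta> - \<xi> k"] by linarith
  also have "\<dots> \<le> s k + lam * norm (\<zeta> - \<xi> k)"
    using g(2) by (simp add: mult_right_mono norm_minus_commute)
  finally show "a l \<bullet> \<zeta> + b l \<le> s k + lam * norm (\<zeta> - \<xi> k)" .
qed

lemma dual_feasible_lipschitz_majorant:
  fixes C :: "real^'p^'m"
  assumes K: "0 < K" and L: "0 < L" and feas: "dual_feasible C d K \<xi> L a b lam s \<gamma>"
  obtains G where "lam-lipschitz_on UNIV G"
    and "\<And>\<zeta>. \<zeta> \<in> polytope C d \<Longrightarrow> max_affine a b L \<zeta> \<le> G \<zeta>"
    and "\<And>k. k \<in> {1..K} \<Longrightarrow> G (\<xi> k) \<le> s k"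
proof
  define G where "G \<zeta> = Min ((\<lambda>k. s k + lam * dist \<zeta> (\<xi> k)) ` {1..K})" for \<zeta>
  have "norm (transpose C *v \<gamma> 1 1 - a 1) \<le> lam"
    using feas K L unfolding dual_feasible_def by auto
  then have "0 \<le> lam"
    using norm_ge_zero order_trans by blast
  then show "lam-lipschitz_on UNIV G"
    unfolding G_def using K by (intro lipschitz_on_Min lipschitz_on_dist_point) auto
  show "max_affine a b L \<zeta> \<le> G \<zeta>" if "\<zeta> \<in> polytope C d" for \<zeta>
    unfolding G_def using K max_affine_le_dual_bound[OF feas L _ that]
    by (subst Min_ge_iff) (auto simp: dist_norm)
  show "G (\<xi> k) \<le> s k" if "k \<in> {1..K}" for k
  proof -
    have "s k + lam * dist (\<xi> k) (\<xi> k) \<in> (\<lambda>j. s j + lam * dist (\<xi> k) (\<xi> j)) ` {1..K}"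
      using that by blast
    then have "G (\<xi> k) \<le> s k + lam * dist (\<xi> k) (\<xi> k)"
      unfolding G_def by (intro Min_le) auto
    then show ?thesis
      by simp
  qed
qed

lemma worst_case_le_dual_objective:
  fixes C :: "real^'p^'m"
  assumes K: "0 < K" and L: "0 < L" and "0 \<le> \<epsilon>"
    and feas: "dual_feasible C d K \<xi> L a b lam s \<gamma>"
  shows "worst_case (wball (polytope C d) \<epsilon> (empirical K \<xi>)) (max_affine a b L)
           \<le> ereal (lam * \<epsilon> + 1 / real K * (\<Sum>k = 1..K. s k))"
proof -
  obtain G where G: "lam-lipschitz_on UNIV G" "\<And>\<zeta>. \<zeta> \<in> polytope C d \<Longrightarrow> max_affine a b L \<zeta> \<le> G \<zeta>"
    "\<And>k. k \<in> {1..K} \<Longrightarrow> G (\<xi> k) \<le> s k"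
    using dual_feasible_lipschitz_majorant[OF K L feas] by blast
  have "integral\<^sup>L (empirical K \<xi>) G = (\<Sum>k=1..K. G (\<xi> k)) / real K"
    by (rule integral_empirical[OF K borel_measurable_lipschitz[OF G(1)]])
  also have "\<dots> \<le> (\<Sum>k=1..K. s k) / real K"
    using G(3) by (intro divide_right_mono sum_mono) auto
  finally have "ereal (integral\<^sup>L (empirical K \<xi>) G + lam * \<epsilon>) \<le> ereal (lam * \<epsilon> + 1 / real K * (\<Sum>k = 1..K. s k))"
    by simp
  moreover have "worst_case (wball (polytope C d) \<epsilon> (empirical K \<xi>)) (max_affine a b L)
      \<le> ereal (integral\<^sup>L (empirical K \<xi>) G + lam * \<epsilon>)"
    using integrable_empirical[OF K borel_measurable_lipschitz[OF G(1)]] G(2) abs_max_affine_le[OF L]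
    by (intro worst_case_le_lipschitz_majorant[OF \<open>0 \<le> \<epsilon>\<close> G(1)] borel_measurable_max_affine)
  ultimately show ?thesis
    by (rule order_trans[rotated])
qed

section \<open>Conic duality on a polytope\<close>

lemma ray_bounded_below_imp_nonneg:
  fixes x :: real
  assumes "\<And>t. 0 \<le> t \<Longrightarrow> c \<le> t * x"
  shows "0 \<le> x"
proof (rule ccontr)
  assume "\<not> 0 \<le> x"
  then have "c \<le> ((\<bar>c\<bar> + 1) / - x) * x"
    by (intro assms) (simp add: divide_nonneg_nonpos)
  also have "\<dots> = - (\<bar>c\<bar> + 1)"
    using \<open>\<not> 0 \<le> x\<close> by (simp add: field_simps)
  finally show False
    by linarith
qed

text \<open>The epigraph of \<open>a \<mapsto> min {\<gamma> \<bullet> e | \<gamma> \<ge> 0, norm (C\<^sup>T \<gamma> - a) \<le> lam}\<close>, which is the LP dual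
  of \<open>max {a \<bullet> u - lam * norm u | C u \<le> e}\<close>.\<close>
definition dual_epigraph :: "real^'p^'m \<Rightarrow> real^'m \<Rightarrow> real \<Rightarrow> ((real^'p) \<times> real) set" where
  "dual_epigraph C e lam =
     {(y, t). \<exists>\<gamma>. (\<forall>j. 0 \<le> \<gamma> $ j) \<and> norm (transpose C *v \<gamma> - y) \<le> lam \<and> \<gamma> \<bullet> e \<le> t}"

lemma convex_dual_epigraph: "convex (dual_epigraph C e lam)"
  unfolding convex_alt
proof (intro ballI allI impI)
  fix z1 z2 and u :: real
  assume "z1 \<in> dual_epigraph C e lam" "z2 \<in> dual_epigraph C e lam" and u: "0 \<le> u \<and> u \<le> 1"
  then obtain y1 t1 g1 y2 t2 g2 where z: "z1 = (y1, t1)" "z2 = (y2, t2)"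
    and g1: "\<forall>j. 0 \<le> g1 $ j" "norm (transpose C *v g1 - y1) \<le> lam" "g1 \<bullet> e \<le> t1"
    and g2: "\<forall>j. 0 \<le> g2 $ j" "norm (transpose C *v g2 - y2) \<le> lam" "g2 \<bullet> e \<le> t2"
    unfolding dual_epigraph_def by blast
  let ?g = "(1 - u) *\<^sub>R g1 + u *\<^sub>R g2"
  have "transpose C *v ?g - ((1 - u) *\<^sub>R y1 + u *\<^sub>R y2)
      = (1 - u) *\<^sub>R (transpose C *v g1 - y1) + u *\<^sub>R (transpose C *v g2 - y2)"
    by (simp add: matrix_vector_right_distrib matrix_vector_mult_scaleR algebra_simps)
  also have "norm \<dots> \<le> (1 - u) * lam + u * lam"
    using u g1(2) g2(2) norm_triangle_ineq[of "(1 - u) *\<^sub>R (transpose C *v g1 - y1)"]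
    by (smt (verit) mult_left_mono norm_scaleR abs_of_nonneg)
  finally have "norm (transpose C *v ?g - ((1 - u) *\<^sub>R y1 + u *\<^sub>R y2)) \<le> lam"
    by (simp add: algebra_simps)
  moreover have "?g \<bullet> e \<le> (1 - u) * t1 + u * t2"
    using u g1(3) g2(3) by (simp add: inner_add_left add_mono mult_left_mono)
  moreover have "\<forall>j. 0 \<le> ?g $ j"
    using u g1(1) g2(1) by simp
  ultimately have "((1 - u) *\<^sub>R y1 + u *\<^sub>R y2, (1 - u) * t1 + u * t2) \<in> dual_epigraph C e lam"
    unfolding dual_epigraph_def by blast
  then show "(1 - u) *\<^sub>R z1 + u *\<^sub>R z2 \<in> dual_epigraph C e lam"
    unfolding z by simp
qed

lemma dual_epigraph_supporting_halfspace:
  fixes C :: "real^'p^'m"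
  assumes "0 \<le> lam" and supp: "\<And>y t. (y, t) \<in> dual_epigraph C e lam \<Longrightarrow> c \<le> n \<bullet> y + \<beta> * t"
  shows "0 \<le> \<beta>" and "0 \<le> (C *v n + \<beta> *\<^sub>R e) $ j" and "c \<le> - lam * norm n"
proof -
  have bound: "c \<le> n \<bullet> (transpose C *v \<gamma> + w) + \<beta> * (\<gamma> \<bullet> e + r)"
    if "\<forall>j. 0 \<le> \<gamma> $ j" "norm w \<le> lam" "0 \<le> r" for \<gamma> w r
    using that by (intro supp) (auto simp: dual_epigraph_def)
  show "0 \<le> \<beta>"
    using bound[of 0 0] assms(1) by (intro ray_bounded_below_imp_nonneg[of c]) (simp add: mult.commute)
  show "0 \<le> (C *v n + \<beta> *\<^sub>R e) $ j"
  proof (rule ray_bounded_below_imp_nonneg[of c])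
    fix t :: real assume "0 \<le> t"
    have "c \<le> n \<bullet> (transpose C *v (t *\<^sub>R axis j 1) + 0) + \<beta> * ((t *\<^sub>R axis j 1) \<bullet> e + 0)"
      using \<open>0 \<le> t\<close> assms(1) by (intro bound) (auto simp: axis_def)
    also have "\<dots> = t * (C *v n + \<beta> *\<^sub>R e) $ j"
      by (simp add: inner_add_right inner_commute[of n] dot_lmul_matrix inner_axis' algebra_simps)
    finally show "c \<le> t * (C *v n + \<beta> *\<^sub>R e) $ j" .
  qed
  show "c \<le> - lam * norm n"
  proof (cases "n = 0")
    case True
    then show ?thesis
      using bound[of 0 0 0] assms(1) by simp
  next
    case False
    have "c \<le> n \<bullet> (transpose C *v 0 + (- (lam / norm n) *\<^sub>R n)) + \<beta> * (0 \<bullet> e + 0)"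
      using assms(1) False by (intro bound) simp_all
    also have "\<dots> = - lam * norm n"
      using False by (simp add: power2_norm_eq_inner[symmetric] power2_eq_square)
    finally show ?thesis .
  qed
qed

lemma dual_epigraph_separation:
  fixes C :: "real^'p^'m"
  assumes "0 \<le> lam" "0 < \<eta>" and disj: "cball (a, v) \<eta> \<inter> dual_epigraph C e lam = {}"
  shows "\<exists>u \<beta>. 0 \<le> \<beta> \<and> (\<forall>j. (C *v u) $ j \<le> \<beta> * e $ j) \<and> \<beta> * v < a \<bullet> u - lam * norm u"
proof -
  have "(0, 0) \<in> dual_epigraph C e lam"
    unfolding dual_epigraph_def using assms(1) by (auto intro!: exI[of _ 0])
  then obtain z c where z: "z \<noteq> 0" "\<forall>x\<in>cball (a, v) \<eta>. z \<bullet> x \<le> c"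
    "\<forall>x\<in>dual_epigraph C e lam. c \<le> z \<bullet> x"
    using separating_hyperplane_sets[OF convex_cball convex_dual_epigraph] disj assms(2)
    by (metis centre_in_cball empty_iff less_imp_le)
  obtain n \<beta> where zn: "z = (n, \<beta>)"
    by (cases z)
  have "(a, v) + (\<eta> / norm z) *\<^sub>R z \<in> cball (a, v) \<eta>"
    using assms(2) by (simp add: dist_norm)
  then have "z \<bullet> ((a, v) + (\<eta> / norm z) *\<^sub>R z) \<le> c"
    using z(2) by blast
  then have "z \<bullet> (a, v) + \<eta> * norm z \<le> c"
    using z(1) by (simp add: inner_add_right power2_norm_eq_inner[symmetric] power2_eq_square)
  then have sep: "n \<bullet> a + \<beta> * v < c"
    using assms(2) z(1) zn by (smt (verit) inner_Pair inner_real_def mult_pos_pos zero_less_norm_iff)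
  have "c \<le> n \<bullet> y + \<beta> * t" if "(y, t) \<in> dual_epigraph C e lam" for y t
    using z(3) zn that by fastforce
  note halfspace = dual_epigraph_supporting_halfspace[where C = C and e = e, OF assms(1) this]
  show ?thesis
  proof (intro exI conjI allI)
    show "0 \<le> \<beta>"
      by (rule halfspace(1))
    show "(C *v - n) $ j \<le> \<beta> * e $ j" for j
      using halfspace(2)[where j = j] by (simp add: matrix_vector_mult_def sum_negf)
    show "\<beta> * v < a \<bullet> - n - lam * norm (- n)"
      using sep halfspace(3) by (simp add: inner_commute)
  qed
qed

lemma polyhedral_bound_scaled:
  fixes C :: "real^'p^'m"
  assumes e: "\<forall>j. 0 \<le> e $ j"
    and bound: "\<And>u. \<forall>j. (C *v u) $ j \<le> e $ j \<Longrightarrow> a \<bullet> u - lam * norm u \<le> v"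
    and "0 \<le> \<beta>" "\<forall>j. (C *v u) $ j \<le> \<beta> * e $ j"
  shows "a \<bullet> u - lam * norm u \<le> \<beta> * v"
proof (cases "\<beta> = 0")
  case False
  then have "0 < \<beta>"
    using \<open>0 \<le> \<beta>\<close> by simp
  have "a \<bullet> ((1 / \<beta>) *\<^sub>R u) - lam * norm ((1 / \<beta>) *\<^sub>R u) \<le> v"
    using assms(4) \<open>0 < \<beta>\<close> by (intro bound) (simp add: matrix_vector_mult_scaleR field_simps)
  then show ?thesis
    using \<open>0 < \<beta>\<close> by (simp add: field_simps)
next
  case True
  have "0 \<le> - (a \<bullet> u - lam * norm u)"
  proof (rule ray_bounded_below_imp_nonneg[of "- v"])
    fix t :: real assume "0 \<le> t"
    have "\<forall>j. (C *v (t *\<^sub>R u)) $ j \<le> e $ j"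
      using assms(4) True e \<open>0 \<le> t\<close> by (simp add: matrix_vector_mult_scaleR) (meson mult_nonneg_nonpos order.trans)
    then have "a \<bullet> (t *\<^sub>R u) - lam * norm (t *\<^sub>R u) \<le> v"
      by (rule bound)
    then show "- v \<le> t * - (a \<bullet> u - lam * norm u)"
      using \<open>0 \<le> t\<close> by (simp add: algebra_simps)
  qed
  with True show ?thesis
    by simp
qed

lemma approx_conic_duality:
  fixes C :: "real^'p^'m"
  assumes e: "\<forall>j. 0 \<le> e $ j" and "0 \<le> lam" "0 < \<eta>"
    and bound: "\<And>u. \<forall>j. (C *v u) $ j \<le> e $ j \<Longrightarrow> a \<bullet> u - lam * norm u \<le> v"
  shows "\<exists>\<gamma>. (\<forall>j. 0 \<le> \<gamma> $ j) \<and> norm (transpose C *v \<gamma> - a) \<le> lam + \<eta> \<and> \<gamma> \<bullet> e \<le> v + \<eta>"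
proof (cases "cball (a, v) \<eta> \<inter> dual_epigraph C e lam = {}")
  case True
  then obtain u \<beta> where "0 \<le> \<beta>" "\<forall>j. (C *v u) $ j \<le> \<beta> * e $ j" "\<beta> * v < a \<bullet> u - lam * norm u"
    using dual_epigraph_separation[OF assms(2,3)] by blast
  with polyhedral_bound_scaled[OF e bound] show ?thesis
    by fastforce
next
  case False
  then obtain y t \<gamma> where near: "dist (a, v) (y, t) \<le> \<eta>"
    and \<gamma>: "\<forall>j. 0 \<le> \<gamma> $ j" "norm (transpose C *v \<gamma> - y) \<le> lam" "\<gamma> \<bullet> e \<le> t"
    unfolding dual_epigraph_def by auto
  have "norm (y - a) \<le> \<eta>" "t \<le> v + \<eta>"
    using dist_fst_le[of "(a, v)" "(y, t)"] dist_snd_le[of "(a, v)" "(y, t)"] near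
    by (auto simp: dist_norm norm_minus_commute dist_real_def)
  then show ?thesis
    using \<gamma> norm_diff_triangle_le[OF \<gamma>(2)] by force
qed

section \<open>Finitely supported transport plans\<close>

lemma bernoulli_mixture_pmf:
  fixes p q :: "'a pmf"
  assumes \<theta>: "0 \<le> \<theta>" "\<theta> \<le> 1" and fin: "finite (set_pmf p)" "finite (set_pmf q)"
  defines "r \<equiv> bernoulli_pmf \<theta> \<bind> (\<lambda>b. if b then p else q)"
  shows "set_pmf r \<subseteq> set_pmf p \<union> set_pmf q"
    and "map_pmf f p = map_pmf f q \<Longrightarrow> map_pmf f r = map_pmf f p"
    and "measure_pmf.expectation r g =
           \<theta> * measure_pmf.expectation p g + (1 - \<theta>) * measure_pmf.expectation q (g :: 'a \<Rightarrow> real)"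
proof -
  show supp: "set_pmf r \<subseteq> set_pmf p \<union> set_pmf q"
    unfolding r_def by (auto split: if_splits)
  show "map_pmf f p = map_pmf f q \<Longrightarrow> map_pmf f r = map_pmf f p"
    unfolding r_def map_bind_pmf by (simp add: if_distrib cong: if_cong)
  define A where "A = set_pmf p \<union> set_pmf q"
  have "finite A"
    unfolding A_def using fin by simp
  have pmf_r: "pmf r x = \<theta> * pmf p x + (1 - \<theta>) * pmf q x" for x
    unfolding r_def pmf_bind using \<theta> by simp
  have "measure_pmf.expectation r g = (\<Sum>x\<in>A. g x * pmf r x)"
    by (rule integral_measure_pmf_real[OF \<open>finite A\<close>]) (use supp in \<open>auto simp: A_def\<close>)
  also have "\<dots> = \<theta> * (\<Sum>x\<in>A. g x * pmf p x) + (1 - \<theta>) * (\<Sum>x\<in>A. g x * pmf q x)"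
    unfolding sum_distrib_left sum.distrib[symmetric] by (intro sum.cong) (simp_all add: pmf_r algebra_simps)
  also have "(\<Sum>x\<in>A. g x * pmf p x) = measure_pmf.expectation p g"
    by (rule integral_measure_pmf_real[OF \<open>finite A\<close>, symmetric]) (auto simp: A_def)
  also have "(\<Sum>x\<in>A. g x * pmf q x) = measure_pmf.expectation q g"
    by (rule integral_measure_pmf_real[OF \<open>finite A\<close>, symmetric]) (auto simp: A_def)
  finally show "measure_pmf.expectation r g = \<theta> * measure_pmf.expectation p g + (1 - \<theta>) * measure_pmf.expectation q g" .
qed

definition finite_plan :: "nat \<Rightarrow> (nat \<Rightarrow> 'a) \<Rightarrow> 'a set \<Rightarrow> ('a \<times> 'a) pmf \<Rightarrow> bool" where
  "finite_plan K \<xi> Xi \<pi> \<longleftrightarrow> finite (set_pmf \<pi>) \<and> map_pmf fst \<pi> = map_pmf \<xi> (pmf_of_set {1..K}) \<and>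
     (\<forall>z\<in>set_pmf \<pi>. snd z \<in> Xi)"

definition plan_outcomes ::
  "nat \<Rightarrow> (nat \<Rightarrow> 'a::real_normed_vector) \<Rightarrow> 'a set \<Rightarrow> ('a \<Rightarrow> real) \<Rightarrow> (real \<times> real) set" where
  "plan_outcomes K \<xi> Xi h =
     {(measure_pmf.expectation \<pi> (\<lambda>z. norm (fst z - snd z)), measure_pmf.expectation \<pi> (\<lambda>z. h (snd z))) | \<pi>.
        finite_plan K \<xi> Xi \<pi>}"

lemma convex_plan_outcomes: "convex (plan_outcomes K \<xi> Xi h)"
  unfolding convex_alt
proof (intro ballI allI impI)
  fix x y and u :: real
  assume "x \<in> plan_outcomes K \<xi> Xi h" "y \<in> plan_outcomes K \<xi> Xi h" and u: "0 \<le> u \<and> u \<le> 1"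
  then obtain p q where p: "finite_plan K \<xi> Xi p"
    "x = (measure_pmf.expectation p (\<lambda>z. norm (fst z - snd z)), measure_pmf.expectation p (\<lambda>z. h (snd z)))"
    and q: "finite_plan K \<xi> Xi q"
    "y = (measure_pmf.expectation q (\<lambda>z. norm (fst z - snd z)), measure_pmf.expectation q (\<lambda>z. h (snd z)))"
    unfolding plan_outcomes_def by blast
  define r where "r = bernoulli_pmf (1 - u) \<bind> (\<lambda>b. if b then p else q)"
  note mix = bernoulli_mixture_pmf[of "1 - u" p q, folded r_def]
  have fin: "finite (set_pmf p)" "finite (set_pmf q)"
    using p(1) q(1) unfolding finite_plan_def by auto
  have "finite_plan K \<xi> Xi r"
    using mix(1)[OF _ _ fin] mix(2)[OF _ _ fin, of fst] p(1) q(1) u fin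
    unfolding finite_plan_def by (auto dest: finite_subset)
  moreover have "(1 - u) *\<^sub>R x + u *\<^sub>R y =
      (measure_pmf.expectation r (\<lambda>z. norm (fst z - snd z)), measure_pmf.expectation r (\<lambda>z. h (snd z)))"
    using u by (simp add: p(2) q(2) mix(3)[OF _ _ fin])
  ultimately show "(1 - u) *\<^sub>R x + u *\<^sub>R y \<in> plan_outcomes K \<xi> Xi h"
    unfolding plan_outcomes_def by blast
qed

lemma sample_pairing_in_plan_outcomes:
  assumes "0 < K" and "\<And>k. k \<in> {1..K} \<Longrightarrow> \<zeta> k \<in> Xi"
  shows "((\<Sum>k=1..K. norm (\<xi> k - \<zeta> k)) / real K, (\<Sum>k=1..K. h (\<zeta> k)) / real K) \<in> plan_outcomes K \<xi> Xi h"
proof -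
  define \<pi> where "\<pi> = map_pmf (\<lambda>k. (\<xi> k, \<zeta> k)) (pmf_of_set {1..K})"
  have "finite_plan K \<xi> Xi \<pi>"
    unfolding finite_plan_def \<pi>_def using assms by (auto simp: pmf.map_comp o_def)
  moreover have "measure_pmf.expectation \<pi> (\<lambda>z. norm (fst z - snd z)) = (\<Sum>k=1..K. norm (\<xi> k - \<zeta> k)) / real K"
    "measure_pmf.expectation \<pi> (\<lambda>z. h (snd z)) = (\<Sum>k=1..K. h (\<zeta> k)) / real K"
    unfolding \<pi>_def using assms(1) by (simp_all add: integral_pmf_of_set)
  ultimately show ?thesis
    unfolding plan_outcomes_def by force
qed

lemma distr_measure_pmf_map:
  "distr (measure_pmf p) borel f = distr (measure_pmf (map_pmf f p)) borel (\<lambda>x. x)"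
  by (simp add: map_pmf_rep_eq distr_distr o_def)

lemma coupling_of_pmf:
  fixes \<pi> :: "('a::euclidean_space \<times> 'a) pmf"
  assumes "map_pmf fst \<pi> = map_pmf \<xi> (pmf_of_set {1..K})"
  shows "coupling (empirical K \<xi>) (distr (measure_pmf \<pi>) borel snd) (distr (measure_pmf \<pi>) (borel \<Otimes>\<^sub>M borel) (\<lambda>z. z))"
  unfolding coupling_def
proof (intro conjI)
  let ?\<pi> = "distr (measure_pmf \<pi>) (borel \<Otimes>\<^sub>M borel) (\<lambda>z. z)"
  show "prob_space ?\<pi>" "sets ?\<pi> = sets (borel \<Otimes>\<^sub>M borel)"
    by (auto intro: measure_pmf.prob_space_distr simp: space_pair_measure)
  have "distr ?\<pi> borel fst = distr (measure_pmf \<pi>) borel fst"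
    by (subst distr_distr) (auto simp: o_def space_pair_measure)
  also have "\<dots> = empirical K \<xi>"
    unfolding empirical_def by (subst (1 2) distr_measure_pmf_map) (simp add: assms)
  finally show "distr ?\<pi> borel fst = empirical K \<xi>" .
  show "distr ?\<pi> borel snd = distr (measure_pmf \<pi>) borel snd"
    by (subst distr_distr) (auto simp: o_def space_pair_measure)
qed

lemma finite_plan_in_wball:
  fixes \<xi> :: "nat \<Rightarrow> 'a::euclidean_space"
  assumes plan: "finite_plan K \<xi> Xi \<pi>" and "Xi \<in> sets borel"
    and cost: "measure_pmf.expectation \<pi> (\<lambda>z. norm (fst z - snd z)) \<le> \<epsilon>"
  shows "distr (measure_pmf \<pi>) borel snd \<in> wball Xi \<epsilon> (empirical K \<xi>)"
proof -
  have fin: "finite (set_pmf \<pi>)" and marg: "map_pmf fst \<pi> = map_pmf \<xi> (pmf_of_set {1..K})"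
    and supp: "\<forall>z\<in>set_pmf \<pi>. snd z \<in> Xi"
    using plan unfolding finite_plan_def by auto
  have "distr (measure_pmf \<pi>) borel snd \<in> distributions_fm Xi"
    unfolding distributions_fm_def using \<open>Xi \<in> sets borel\<close> supp
    by (auto simp: AE_distr_iff AE_measure_pmf_iff integrable_distr_eq
        intro!: measure_pmf.prob_space_distr integrable_measure_pmf_finite fin)
  moreover have "(\<integral>\<^sup>+ z. ennreal (norm (fst z - snd z)) \<partial>distr (measure_pmf \<pi>) (borel \<Otimes>\<^sub>M borel) (\<lambda>z. z))
      = ennreal (measure_pmf.expectation \<pi> (\<lambda>z. norm (fst z - snd z)))"
    by (subst nn_integral_distr)
      (auto simp: space_pair_measure intro!: nn_integral_eq_integral integrable_measure_pmf_finite fin)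
  then have "wasserstein1 (empirical K \<xi>) (distr (measure_pmf \<pi>) borel snd) \<le> ennreal \<epsilon>"
    unfolding wasserstein1_def using coupling_of_pmf[OF marg] cost
    by (metis (mono_tags, lifting) INF_lower2 ennreal_leI mem_Collect_eq)
  ultimately show ?thesis
    unfolding wball_def by blast
qed

lemma plan_outcome_le_worst_case:
  fixes \<xi> :: "nat \<Rightarrow> 'a::euclidean_space"
  assumes "(c, v) \<in> plan_outcomes K \<xi> Xi h" "c \<le> \<epsilon>" "Xi \<in> sets borel" "h \<in> borel_measurable borel"
  shows "ereal v \<le> worst_case (wball Xi \<epsilon> (empirical K \<xi>)) h"
proof -
  obtain \<pi> where \<pi>: "finite_plan K \<xi> Xi \<pi>"
    "c = measure_pmf.expectation \<pi> (\<lambda>z. norm (fst z - snd z))" "v = measure_pmf.expectation \<pi> (\<lambda>z. h (snd z))"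
    using assms(1) unfolding plan_outcomes_def by blast
  have "distr (measure_pmf \<pi>) borel snd \<in> wball Xi \<epsilon> (empirical K \<xi>)"
    using \<pi> assms(2,3) by (intro finite_plan_in_wball) auto
  moreover have "integral\<^sup>L (distr (measure_pmf \<pi>) borel snd) h = v"
    using \<pi>(3) assms(4) by (simp add: integral_distr)
  ultimately show ?thesis
    unfolding worst_case_def by (metis SUP_upper)
qed

section \<open>Strong duality\<close>

lemma separating_line_quadrant:
  fixes A :: "(real \<times> real) set"
  assumes "convex A" "A \<noteq> {}" and below: "\<And>c v. (c, v) \<in> A \<Longrightarrow> c \<le> \<epsilon> \<Longrightarrow> v < w"
  obtains \<alpha> \<beta> where "\<alpha> \<le> 0" "0 \<le> \<beta>" "(\<alpha>, \<beta>) \<noteq> 0"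
    and "\<And>c v. (c, v) \<in> A \<Longrightarrow> \<alpha> * c + \<beta> * v \<le> \<alpha> * \<epsilon> + \<beta> * w"
proof -
  have "A \<inter> {..\<epsilon>} \<times> {w..} = {}"
    using below by force
  moreover have "{..\<epsilon>} \<times> {w..} \<noteq> {}"
    by auto
  ultimately obtain z t where z: "z \<noteq> 0" "\<forall>x\<in>A. z \<bullet> x \<le> t" "\<forall>x\<in>{..\<epsilon>} \<times> {w..}. t \<le> z \<bullet> x"
    using separating_hyperplane_sets[OF assms(1) convex_Times[OF convex_real_interval(2,1)] assms(2)] by blast
  obtain \<alpha> \<beta> where z_eq: "z = (\<alpha>, \<beta>)"
    by (cases z)
  have quadrant: "t \<le> \<alpha> * c + \<beta> * v" if "c \<le> \<epsilon>" "w \<le> v" for c v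
    using z(3) that z_eq by fastforce
  show ?thesis
  proof
    show "\<alpha> \<le> 0"
      using quadrant[of "\<epsilon> - _" w]
      by (intro ray_bounded_below_imp_nonneg[of "t - \<alpha> * \<epsilon> - \<beta> * w", THEN neg_0_le_iff_le[THEN iffD1]])
        (simp add: algebra_simps)
    show "0 \<le> \<beta>"
      using quadrant[of \<epsilon> "w + _"]
      by (intro ray_bounded_below_imp_nonneg[of "t - \<alpha> * \<epsilon> - \<beta> * w"]) (simp add: algebra_simps)
    show "(\<alpha>, \<beta>) \<noteq> 0"
      using z(1) z_eq by simp
    show "\<alpha> * c + \<beta> * v \<le> \<alpha> * \<epsilon> + \<beta> * w" if "(c, v) \<in> A" for c v
      using z(2) that z_eq quadrant[of \<epsilon> w] by fastforce
  qed
qed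

lemma convex_lagrange_multiplier:
  fixes A :: "(real \<times> real) set"
  assumes "convex A" "(0, v0) \<in> A" "0 < \<epsilon>" and below: "\<And>c v. (c, v) \<in> A \<Longrightarrow> c \<le> \<epsilon> \<Longrightarrow> v < w"
  shows "\<exists>\<mu>\<ge>0. \<forall>(c, v) \<in> A. v + \<mu> * (\<epsilon> - c) \<le> w"
proof -
  obtain \<alpha> \<beta> where "\<alpha> \<le> 0" "0 \<le> \<beta>" "(\<alpha>, \<beta>) \<noteq> 0"
    and line: "\<And>c v. (c, v) \<in> A \<Longrightarrow> \<alpha> * c + \<beta> * v \<le> \<alpha> * \<epsilon> + \<beta> * w"
    using separating_line_quadrant[of A \<epsilon> w] assms(1,2) below by blast
  \<comment> \<open>\<open>(0, v0)\<close> is a Slater point: as \<open>0 < \<epsilon>\<close>, the separating line cannot be vertical.\<close>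
  have "\<beta> \<noteq> 0"
  proof
    assume "\<beta> = 0"
    then have "\<alpha> * \<epsilon> < 0"
      using \<open>\<alpha> \<le> 0\<close> \<open>(\<alpha>, \<beta>) \<noteq> 0\<close> assms(3) by (simp add: zero_prod_def mult_neg_pos)
    then show False
      using line[OF assms(2)] \<open>\<beta> = 0\<close> by simp
  qed
  then have "0 < \<beta>"
    using \<open>0 \<le> \<beta>\<close> by simp
  have "v + (- \<alpha> / \<beta>) * (\<epsilon> - c) \<le> w" if "(c, v) \<in> A" for c v
  proof -
    have "\<beta> * (v + (- \<alpha> / \<beta>) * (\<epsilon> - c)) = \<alpha> * c + \<beta> * v - \<alpha> * \<epsilon>"
      using \<open>0 < \<beta>\<close> by (simp add: field_simps)
    also have "\<dots> \<le> \<beta> * w"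
      using line[OF that] by simp
    finally show ?thesis
      using \<open>0 < \<beta>\<close> by simp
  qed
  moreover have "0 \<le> - \<alpha> / \<beta>"
    using \<open>\<alpha> \<le> 0\<close> \<open>0 < \<beta>\<close> by (simp add: divide_nonpos_pos)
  ultimately show ?thesis
    by blast
qed

lemma separable_sum_bound_bdd_above:
  fixes f :: "'i \<Rightarrow> 'a \<Rightarrow> real"
  assumes "finite I" "i \<in> I" and \<xi>: "\<And>i. i \<in> I \<Longrightarrow> \<xi> i \<in> X"
    and bound: "\<And>\<zeta>. (\<And>i. i \<in> I \<Longrightarrow> \<zeta> i \<in> X) \<Longrightarrow> (\<Sum>i\<in>I. f i (\<zeta> i)) \<le> R"
  shows "bdd_above (f i ` X)"
proof (rule bdd_aboveI2)
  fix z assume "z \<in> X"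
  have "(\<Sum>j\<in>I. f j ((\<xi>(i := z)) j)) = f i z + (\<Sum>j\<in>I - {i}. f j (\<xi> j))"
    using assms(1,2) by (subst sum.remove[of _ i]) (auto intro!: sum.cong)
  moreover have "(\<Sum>j\<in>I. f j ((\<xi>(i := z)) j)) \<le> R"
    using \<xi> \<open>z \<in> X\<close> by (intro bound) auto
  ultimately show "f i z \<le> R - (\<Sum>j\<in>I - {i}. f j (\<xi> j))"
    by simp
qed

lemma separable_sum_bound:
  fixes f :: "'i \<Rightarrow> 'a \<Rightarrow> real"
  assumes "finite I" and \<xi>: "\<And>i. i \<in> I \<Longrightarrow> \<xi> i \<in> X"
    and bound: "\<And>\<zeta>. (\<And>i. i \<in> I \<Longrightarrow> \<zeta> i \<in> X) \<Longrightarrow> (\<Sum>i\<in>I. f i (\<zeta> i)) \<le> R"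
  shows "\<exists>s. (\<forall>i\<in>I. \<forall>z\<in>X. f i z \<le> s i) \<and> (\<Sum>i\<in>I. s i) \<le> R"
proof -
  have bdd: "bdd_above (f i ` X)" if "i \<in> I" for i
    using separable_sum_bound_bdd_above[where f = f and \<xi> = \<xi>, OF \<open>finite I\<close> that \<xi> bound] .
  define s where "s i = (SUP z\<in>X. f i z)" for i
  have "(\<Sum>i\<in>I. s i) \<le> R"
  proof (rule field_le_epsilon)
    fix e :: real assume "0 < e"
    define \<delta> where "\<delta> = e / (card I + 1)"
    have "\<exists>z\<in>X. s i - \<delta> < f i z" if "i \<in> I" for i
      using less_cSUP_iff[of X "f i" "s i - \<delta>"] \<xi>[OF that] bdd[OF that] \<open>0 < e\<close>
      unfolding s_def \<delta>_def by auto
    then obtain \<zeta> where \<zeta>: "\<And>i. i \<in> I \<Longrightarrow> \<zeta> i \<in> X \<and> s i - \<delta> < f i (\<zeta> i)"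
      using bchoice[of I "\<lambda>i z. z \<in> X \<and> s i - \<delta> < f i z"] by blast
    have "(\<Sum>i\<in>I. s i) - card I * \<delta> = (\<Sum>i\<in>I. s i - \<delta>)"
      by (simp add: sum_subtractf)
    also have "\<dots> \<le> (\<Sum>i\<in>I. f i (\<zeta> i))"
      using \<zeta> by (intro sum_mono) (simp add: less_imp_le)
    also have "\<dots> \<le> R"
      using \<zeta> by (intro bound) auto
    moreover have "card I * \<delta> \<le> e"
      unfolding \<delta>_def using \<open>0 < e\<close> by (simp add: field_simps)
    ultimately show "(\<Sum>i\<in>I. s i) \<le> R + e"
      by linarith
  qed
  moreover have "\<forall>i\<in>I. \<forall>z\<in>X. f i z \<le> s i"
    unfolding s_def using bdd by (auto intro: cSUP_upper)
  ultimately show ?thesis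
    by blast
qed

lemma lagrangian_envelope_bound:
  fixes \<xi> :: "nat \<Rightarrow> 'a::euclidean_space"
  assumes K: "0 < K" and "0 < \<epsilon>" and samples: "\<And>k. k \<in> {1..K} \<Longrightarrow> \<xi> k \<in> Xi"
    and "Xi \<in> sets borel" "h \<in> borel_measurable borel"
    and WC: "worst_case (wball Xi \<epsilon> (empirical K \<xi>)) h < ereal w"
  shows "\<exists>\<mu>\<ge>0. \<exists>s. (\<forall>k\<in>{1..K}. \<forall>z\<in>Xi. h z \<le> s k + \<mu> * norm (z - \<xi> k)) \<and>
           (\<Sum>k=1..K. s k) \<le> real K * (w - \<mu> * \<epsilon>)"
proof -
  let ?A = "plan_outcomes K \<xi> Xi h"
  have "(0, (\<Sum>k=1..K. h (\<xi> k)) / real K) \<in> ?A"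
    using sample_pairing_in_plan_outcomes[where \<zeta> = \<xi> and \<xi> = \<xi> and h = h, OF K samples] by simp
  moreover have "v < w" if "(c, v) \<in> ?A" "c \<le> \<epsilon>" for c v
    using le_less_trans[OF plan_outcome_le_worst_case[OF that assms(4,5)] WC] by simp
  ultimately obtain \<mu> where "0 \<le> \<mu>" and \<mu>: "\<forall>(c, v) \<in> ?A. v + \<mu> * (\<epsilon> - c) \<le> w"
    using convex_lagrange_multiplier[OF convex_plan_outcomes _ \<open>0 < \<epsilon>\<close>] by blast
  have "(\<Sum>k=1..K. h (\<zeta> k) - \<mu> * norm (\<zeta> k - \<xi> k)) \<le> real K * (w - \<mu> * \<epsilon>)"
    if "\<And>k. k \<in> {1..K} \<Longrightarrow> \<zeta> k \<in> Xi" for \<zeta>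
  proof -
    let ?cost = "(\<Sum>k=1..K. norm (\<xi> k - \<zeta> k)) / real K" and ?value = "(\<Sum>k=1..K. h (\<zeta> k)) / real K"
    have "?value + \<mu> * (\<epsilon> - ?cost) \<le> w"
      using bspec[OF \<mu> sample_pairing_in_plan_outcomes[where \<zeta> = \<zeta> and \<xi> = \<xi> and h = h, OF K that]]
      by simp
    then have "real K * (?value - \<mu> * ?cost) \<le> real K * (w - \<mu> * \<epsilon>)"
      by (intro mult_left_mono) (auto simp: right_diff_distrib)
    moreover have "(\<Sum>k=1..K. h (\<zeta> k) - \<mu> * norm (\<zeta> k - \<xi> k)) = real K * (?value - \<mu> * ?cost)"
      using K by (simp add: sum_subtractf sum_distrib_left norm_minus_commute field_simps)
    ultimately show ?thesis
      by simp
  qed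
  then obtain s where "\<forall>k\<in>{1..K}. \<forall>z\<in>Xi. h z - \<mu> * norm (z - \<xi> k) \<le> s k"
    "(\<Sum>k=1..K. s k) \<le> real K * (w - \<mu> * \<epsilon>)"
    using separable_sum_bound[of "{1..K}" \<xi> Xi "\<lambda>k z. h z - \<mu> * norm (z - \<xi> k)"] samples by blast
  with \<open>0 \<le> \<mu>\<close> show ?thesis
    by (intro exI[of _ \<mu>] exI[of _ s]) (auto simp: algebra_simps)
qed

lemma bchoice2:
  "(\<And>x y. x \<in> A \<Longrightarrow> y \<in> B \<Longrightarrow> \<exists>z. P x y z) \<Longrightarrow> \<exists>f. \<forall>x\<in>A. \<forall>y\<in>B. P x y (f x y)"
  using bchoice[of A "\<lambda>x g. \<forall>y\<in>B. P x y (g y)"] by (metis bchoice)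

lemma dual_feasible_of_envelope:
  fixes C :: "real^'p^'m"
  assumes "0 \<le> \<mu>" "0 < \<eta>" and samples: "\<And>k. k \<in> {1..K} \<Longrightarrow> \<xi> k \<in> polytope C d"
    and envelope: "\<And>k z. k \<in> {1..K} \<Longrightarrow> z \<in> polytope C d \<Longrightarrow> max_affine a b L z \<le> s k + \<mu> * norm (z - \<xi> k)"
  shows "\<exists>\<gamma>. dual_feasible C d K \<xi> L a b (\<mu> + \<eta>) (\<lambda>k. s k + \<eta>) \<gamma>"
proof -
  have "\<exists>g. b l + a l \<bullet> \<xi> k + g \<bullet> (d - C *v \<xi> k) \<le> s k + \<eta> \<and>
      norm (transpose C *v g - a l) \<le> \<mu> + \<eta> \<and> (\<forall>j. 0 \<le> g $ j)"
    if k: "k \<in> {1..K}" and l: "l \<in> {1..L}" for k l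
  proof -
    have slack: "\<forall>j. 0 \<le> (d - C *v \<xi> k) $ j"
      using samples[OF k] unfolding polytope_def by simp
    have "a l \<bullet> u - \<mu> * norm u \<le> s k - b l - a l \<bullet> \<xi> k" if "\<forall>j. (C *v u) $ j \<le> (d - C *v \<xi> k) $ j" for u
    proof -
      have "\<xi> k + u \<in> polytope C d"
        using that unfolding polytope_def by (simp add: matrix_vector_right_distrib le_diff_eq add_ac)
      from envelope[OF k this] have "max_affine a b L (\<xi> k + u) \<le> s k + \<mu> * norm u"
        by simp
      then show ?thesis
        using max_affine_ge[OF l, where a = a and b = b and \<zeta> = "\<xi> k + u"] by (simp add: inner_add_right)
    qed
    then obtain g where "\<forall>j. 0 \<le> g $ j" "norm (transpose C *v g - a l) \<le> \<mu> + \<eta>"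
      "g \<bullet> (d - C *v \<xi> k) \<le> s k - b l - a l \<bullet> \<xi> k + \<eta>"
      using approx_conic_duality[OF slack assms(1,2)] by blast
    then show ?thesis
      by (intro exI[of _ g]) auto
  qed
  then show ?thesis
    unfolding dual_feasible_def by (rule bchoice2)
qed

lemma dual_feasible_zero_multipliers:
  "dual_feasible C d K \<xi> L a b (\<Sum>l=1..L. norm (a l)) (\<lambda>k. max_affine a b L (\<xi> k)) (\<lambda>k l. 0)"
proof -
  have "b l + a l \<bullet> \<xi> k \<le> max_affine a b L (\<xi> k)" if "l \<in> {1..L}" for k l
    using max_affine_ge[OF that] by (simp add: add.commute)
  then show ?thesis
    unfolding dual_feasible_def by (auto intro: member_le_sum)
qed

lemma exists_dual_feasible_le:
  fixes C :: "real^'p^'m"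
  assumes K: "0 < K" and L: "0 < L" and "0 \<le> \<epsilon>"
    and samples: "\<And>k. k \<in> {1..K} \<Longrightarrow> \<xi> k \<in> polytope C d"
    and WC: "worst_case (wball (polytope C d) \<epsilon> (empirical K \<xi>)) (max_affine a b L) < ereal w"
  shows "\<exists>lam s \<gamma>. dual_feasible C d K \<xi> L a b lam s \<gamma> \<and> lam * \<epsilon> + 1 / real K * (\<Sum>k = 1..K. s k) \<le> w"
proof (cases "\<epsilon> = 0")
  case True
  \<comment> \<open>The Slater argument needs \<open>0 < \<epsilon>\<close>; here \<open>\<gamma> = 0\<close> attains the empirical mean of \<open>h\<close>,
    which is at most the worst case.\<close>
  let ?h = "max_affine a b L"
  have "(0, (\<Sum>k=1..K. ?h (\<xi> k)) / real K) \<in> plan_outcomes K \<xi> (polytope C d) ?h"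
    using sample_pairing_in_plan_outcomes[where \<zeta> = \<xi> and \<xi> = \<xi> and h = ?h, OF K samples] by simp
  then have "(\<Sum>k=1..K. ?h (\<xi> k)) / real K < w"
    using le_less_trans[OF plan_outcome_le_worst_case[OF _ _ polytope_borel borel_measurable_max_affine] WC] True
    by simp
  with dual_feasible_zero_multipliers True show ?thesis
    by fastforce
next
  case False
  then have "0 < \<epsilon>"
    using \<open>0 \<le> \<epsilon>\<close> by simp
  obtain w' where w': "worst_case (wball (polytope C d) \<epsilon> (empirical K \<xi>)) (max_affine a b L) < ereal w'" "w' < w"
    using ereal_dense2[OF WC] by auto
  obtain \<mu> s where "0 \<le> \<mu>"
    and envelope: "\<forall>k\<in>{1..K}. \<forall>z\<in>polytope C d. max_affine a b L z \<le> s k + \<mu> * norm (z - \<xi> k)"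
    and sum_s: "(\<Sum>k=1..K. s k) \<le> real K * (w' - \<mu> * \<epsilon>)"
    using lagrangian_envelope_bound[OF K \<open>0 < \<epsilon>\<close> samples polytope_borel borel_measurable_max_affine w'(1)]
    by blast
  define \<eta> where "\<eta> = (w - w') / (\<epsilon> + 1)"
  have "0 < \<eta>"
    using w'(2) \<open>0 \<le> \<epsilon>\<close> by (simp add: \<eta>_def)
  obtain \<gamma> where feas: "dual_feasible C d K \<xi> L a b (\<mu> + \<eta>) (\<lambda>k. s k + \<eta>) \<gamma>"
    using dual_feasible_of_envelope[where K = K and \<xi> = \<xi>, OF \<open>0 \<le> \<mu>\<close> \<open>0 < \<eta>\<close> samples] envelope by blast
  have "(\<Sum>k=1..K. s k) / real K \<le> w' - \<mu> * \<epsilon>"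
    using sum_s K by (simp add: pos_divide_le_eq mult.commute)
  have "(\<mu> + \<eta>) * \<epsilon> + 1 / real K * (\<Sum>k = 1..K. s k + \<eta>) = \<mu> * \<epsilon> + (\<Sum>k=1..K. s k) / real K + \<eta> * (\<epsilon> + 1)"
    using K by (simp add: sum.distrib field_simps)
  also have "\<dots> \<le> w' + \<eta> * (\<epsilon> + 1)"
    using \<open>(\<Sum>k=1..K. s k) / real K \<le> w' - \<mu> * \<epsilon>\<close> by simp
  also have "\<dots> = w"
    unfolding \<eta>_def using \<open>0 \<le> \<epsilon>\<close> by simp
  finally show ?thesis
    using feas by blast
qed

lemma dual_lower_bound_le_worst_case:
  fixes C :: "real^'p^'m"
  assumes "0 < K" "0 < L" "0 \<le> \<epsilon>" "\<And>k. k \<in> {1..K} \<Longrightarrow> \<xi> k \<in> polytope C d"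
    and lower: "\<And>lam s \<gamma>. dual_feasible C d K \<xi> L a b lam s \<gamma> \<Longrightarrow> t \<le> lam * \<epsilon> + 1 / real K * (\<Sum>k = 1..K. s k)"
  shows "ereal t \<le> worst_case (wball (polytope C d) \<epsilon> (empirical K \<xi>)) (max_affine a b L)"
proof (rule dense_ge)
  fix u assume less: "worst_case (wball (polytope C d) \<epsilon> (empirical K \<xi>)) (max_affine a b L) < u"
  show "ereal t \<le> u"
  proof (cases u)
    case (real w)
    with less exists_dual_feasible_le[where \<xi> = \<xi>, OF assms(1-4)] lower show ?thesis
      by force
  qed (use less in auto)
qed

theorem proposition1:
  fixes X :: "'N::finite \<Rightarrow> (real^'n) set"
    and C :: "'N \<Rightarrow> real^'p^'m" and d :: "'N \<Rightarrow> real^'m"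
    and K :: "'N \<Rightarrow> nat" and xis :: "'N \<Rightarrow> nat \<Rightarrow> real^'p"
    and \<epsilon> :: "'N \<Rightarrow> real"
    and L :: "'N \<Rightarrow> nat"
    and a :: "'N \<Rightarrow> nat \<Rightarrow> ('N \<Rightarrow> real^'n) \<Rightarrow> real^'p"
    and b :: "'N \<Rightarrow> nat \<Rightarrow> ('N \<Rightarrow> real^'n) \<Rightarrow> real"
    and xstar :: "'N \<Rightarrow> real^'n"
    and lamstar :: "'N \<Rightarrow> real" and sstar :: "'N \<Rightarrow> nat \<Rightarrow> real"
    and gamstar :: "'N \<Rightarrow> nat \<Rightarrow> nat \<Rightarrow> real^'m"
  defines "Xi \<equiv> \<lambda>i. polytope (C i) (d i)"
    and "h \<equiv> \<lambda>i x xi. Max ((\<lambda>l. a i l x \<bullet> xi + b i l x) ` {1..L i})"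
    and "feas \<equiv> \<lambda>i (x :: 'N \<Rightarrow> real^'n) (lam :: real) (s :: nat \<Rightarrow> real) (gam :: nat \<Rightarrow> nat \<Rightarrow> real^'m).
           x i \<in> X i \<and>
           (\<forall>k \<in> {1..K i}. \<forall>l \<in> {1..L i}.
              b i l x + a i l x \<bullet> xis i k + gam k l \<bullet> (d i - C i *v xis i k) \<le> s k \<and>
              norm (transpose (C i) *v gam k l - a i l x) \<le> lam \<and>
              (\<forall>j. 0 \<le> gam k l $ j))"
    and "obj \<equiv> \<lambda>i (lam :: real) (s :: nat \<Rightarrow> real). lam * \<epsilon> i + (1 / real (K i)) * (\<Sum>k = 1..K i. s k)"
  assumes K_pos: "\<And>i. 0 < K i"
    and L_pos: "\<And>i. 0 < L i"
    and eps_nonneg: "\<And>i. 0 \<le> \<epsilon> i"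
    and samples: "\<And>i k. k \<in> {1..K i} \<Longrightarrow> xis i k \<in> Xi i"
    and GNE_feas: "\<And>i. feas i xstar (lamstar i) (sstar i) (gamstar i)"
    and GNE_opt: "\<And>i y lam s gam. feas i (xstar(i := y)) lam s gam \<Longrightarrow>
                     obj i (lamstar i) (sstar i) \<le> obj i lam s"
  shows "DRNE X (\<lambda>i. wball (Xi i) (\<epsilon> i) (empirical (K i) (xis i))) h xstar"
proof -
  have h_eq: "h i x = max_affine (\<lambda>l. a i l x) (\<lambda>l. b i l x) (L i)" for i x
    unfolding h_def max_affine_def ..
  have feas_iff: "feas i x lam s \<gamma> \<longleftrightarrow> x i \<in> X i \<and>
      dual_feasible (C i) (d i) (K i) (xis i) (L i) (\<lambda>l. a i l x) (\<lambda>l. b i l x) lam s \<gamma>" for i x lam s \<gamma>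
    unfolding feas_def dual_feasible_def ..
  show ?thesis
    unfolding DRNE_def
  proof (intro conjI allI ballI)
    show "xstar i \<in> X i" for i
      using GNE_feas feas_iff by blast
  next
    fix i y assume "y \<in> X i"
    let ?B = "wball (Xi i) (\<epsilon> i) (empirical (K i) (xis i))"
    have "worst_case ?B (h i xstar) \<le> ereal (obj i (lamstar i) (sstar i))"
      unfolding h_eq obj_def Xi_def
      using GNE_feas[of i] feas_iff by (intro worst_case_le_dual_objective[OF K_pos L_pos eps_nonneg]) blast
    also have "\<dots> \<le> worst_case ?B (h i (xstar(i := y)))"
      unfolding h_eq Xi_def
      using GNE_opt[of i y] feas_iff \<open>y \<in> X i\<close> samples[unfolded Xi_def]
      by (intro dual_lower_bound_le_worst_case[OF K_pos L_pos eps_nonneg]) (auto simp: obj_def)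
    finally show "worst_case ?B (h i xstar) \<le> worst_case ?B (h i (xstar(i := y)))" .
  qed
qed

end
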